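(* Consider a mixture of $m=2$ Bernoulli components with $D=2$ features, true distribution $p^*=\pi_1^*B(\cdot\mid\boldsymbol\mu_1^* )+\pi_2^*B(\cdot\mid\boldsymbol\mu_2^* )$ with $\pi_1^*\in(0,1)$. Assume $\sigma_{12}\ne0$ and $\overline{\mathbf x}\in(0,1)^D$. Run population EM with $\pi_1=\epsilon$ small, $\boldsymbol\mu_2=\overline{\mathbf x}$, and $\boldsymbol\mu_1$ initialized uniformly at random in $[0,1]^D$. Then, with probability $1$, $\boldsymbol\lambda$ converges to the positive regions $\mathbb R^2_{++}\cup(-\mathbb R^2_{++})$ at a linear rate. Therefore EM almost surely escapes one-cluster regions.
   Context: Model: $B(\mathbf x\mid\boldsymbol\mu)=\prod_i\mu_i^{x_i}(1-\mu_i)^{1-x_i}$ on $\{0,1\}^D$, fitted with the model $\pi_1B(\cdot\mid\boldsymbol\mu_1)+\pi_2B(\cdot\mid\boldsymbol\mu_2)$. Population EM sets $\tilde q_c=p^*\gamma_c/\pi_c$, where $\gamma_c=\pi_cB(\cdot\mid\boldsymbol\mu_c)/p(\cdot\mid\theta)$, and $Z_c=\int\tilde q_c$. It updates $\pi_c\leftarrow\pi_cZ_c$ and $\boldsymbol\mu_c\leftarrow$ the mean of $\tilde q_c/Z_c$. A one-cluster region means $\pi_1$ near $0$; escaping means $\pi_1$ grows away from $0$. Notation: - $\overline{\mathbf x}=\mathbb E_{p^*}[\mathbf x]$, $S_i=\overline x_i(1-\overline x_i)$ and $\boldsymbol\mu^*=(\boldsymbol\mu_1^*-\boldsymbol\mu_2^*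 )/2$. - $\mathbf b=\boldsymbol\mu_1-\overline{\mathbf x}$ and $\lambda_i=2S_i^{-1}\mu_i^*b_i$. - $\sigma_{12}=\mathbb E[x_1x_2]-\mathbb E[x_1]\mathbb E[x_2]=4\pi_1^*\pi_2^*\mu_1^*\mu_2^*$. *)

theory Defs
  imports "HOL-Analysis.Analysis" "HOL-Probability.Probability"
begin

definition binary_points :: "(real^'n) set" where
  "binary_points = {x. \<forall>i. x$i = 0 \<or> x$i = 1}"

definition bern :: "real^'n \<Rightarrow> real^'n \<Rightarrow> real" where
  "bern mu x = (\<Prod>i\<in>UNIV. (mu$i) ^ (if x$i = 1 then 1 else 0) * (1 - mu$i) ^ (if x$i = 1 then 0 else 1))"

definition pstar :: "real \<Rightarrow> real^'n \<Rightarrow> real^'n \<Rightarrow> real^'n \<Rightarrow> real" where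
  "pstar p1 m1 m2 x = p1 * bern m1 x + (1 - p1) * bern m2 x"

definition xbar :: "real \<Rightarrow> real^'n \<Rightarrow> real^'n \<Rightarrow> real^'n" where
  "xbar p1 m1 m2 = (\<Sum>x\<in>binary_points. pstar p1 m1 m2 x *\<^sub>R x)"

definition Estar :: "real \<Rightarrow> real^'n \<Rightarrow> real^'n \<Rightarrow> (real^'n \<Rightarrow> real) \<Rightarrow> real" where
  "Estar p1 m1 m2 f = (\<Sum>x\<in>binary_points. pstar p1 m1 m2 x * f x)"

definition sigma12 :: "real \<Rightarrow> real^2 \<Rightarrow> real^2 \<Rightarrow> real" where
  "sigma12 p1 m1 m2 = Estar p1 m1 m2 (\<lambda>x. x$1 * x$2)
      - Estar p1 m1 m2 (\<lambda>x. x$1) * Estar p1 m1 m2 (\<lambda>x. x$2)"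

text \<open>One-cluster regime (pi_1 -> 0, mu_2 = xbar): p(.|theta) = B(.|xbar), and
  q~_1 = p* gamma_1 / pi_1 = p* B(.|mu_1) / B(.|xbar).\<close>
definition qtil1 :: "real \<Rightarrow> real^'n \<Rightarrow> real^'n \<Rightarrow> real^'n \<Rightarrow> real^'n \<Rightarrow> real" where
  "qtil1 p1 m1 m2 mu x = pstar p1 m1 m2 x * bern mu x / bern (xbar p1 m1 m2) x"

text \<open>Z_1 = integral of q~_1 (the multiplicative update factor of pi_1).\<close>
definition Z1 :: "real \<Rightarrow> real^'n \<Rightarrow> real^'n \<Rightarrow> real^'n \<Rightarrow> real" where
  "Z1 p1 m1 m2 mu = (\<Sum>x\<in>binary_points. qtil1 p1 m1 m2 mu x)"

definition em_mu1 :: "real \<Rightarrow> real^'n \<Rightarrow> real^'n \<Rightarrow> real^'n \<Rightarrow> real^'n" where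
  "em_mu1 p1 m1 m2 mu = (1 / Z1 p1 m1 m2 mu) *\<^sub>R (\<Sum>x\<in>binary_points. qtil1 p1 m1 m2 mu x *\<^sub>R x)"

text \<open>lambda_i = 2 S_i^{-1} mu*_i b_i with b = mu_1 - xbar, S_i = xbar_i (1 - xbar_i),
  mu* = (mu1* - mu2*)/2.\<close>
definition lam :: "real \<Rightarrow> real^'n \<Rightarrow> real^'n \<Rightarrow> real^'n \<Rightarrow> real^'n" where
  "lam p1 m1 m2 mu = (\<chi> i. 2 / ((xbar p1 m1 m2)$i * (1 - (xbar p1 m1 m2)$i))
        * ((m1$i - m2$i) / 2) * (mu$i - (xbar p1 m1 m2)$i))"

definition pos_regions :: "(real^'n) set" where
  "pos_regions = {v. \<forall>i. v$i > 0} \<union> {v. \<forall>i. v$i < 0}"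

end

theory Submission
  imports Defs
begin

(* In the odds coordinates a = odds(mu_1) / odds(xbar_1) and b = odds(mu_2) / odds(xbar_2), with the
   second feature reversed when sigma_12 < 0, the population EM update of mu_1 in the one-cluster regime
   is the coupled map a' = a G1(b), b' = b G2(a), where G1 and G2 are increasing Moebius maps that move
   every positive number towards 1.  Once an orbit enters one of the quadrants {a, b > 1} or {a, b < 1}
   it moves monotonically away from (1, 1): from then on lambda lies in the positive regions and Z_1
   stays above a constant larger than 1, so pi_1 grows geometrically.  The initialisations whose orbit
   never enters these quadrants form an antichain for the componentwise order, because for two comparable
   such orbits the ratio of their a-coordinates would grow geometrically while staying bounded.  A planar
   antichain is the image of a subset of a line under a Lipschitz map, hence a null set. *)

section \<open>Maps pulling positive numbers towards one\<close>

locale odds_gain =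
  fixes G :: "real \<Rightarrow> real" and k :: real
  assumes gain_above_one: "1 \<le> y \<Longrightarrow> 1 \<le> G y \<and> G y \<le> y"
    and gain_below_one: "0 < y \<Longrightarrow> y \<le> 1 \<Longrightarrow> y \<le> G y \<and> G y \<le> 1"
    and gain_strict_mono: "0 < y \<Longrightarrow> y < y' \<Longrightarrow> G y < G y'"
    and gain_increase_below_one: "0 < y \<Longrightarrow> y \<le> y' \<Longrightarrow> y' \<le> 1 \<Longrightarrow> k * (y' - y) \<le> G y' - G y"
    and rate_pos: "0 < k"
begin

lemma gain_pos: "0 < y \<Longrightarrow> 0 < G y"
  using gain_above_one[of y] gain_below_one[of y] by (cases "1 \<le> y") auto

lemma gain_mono: "0 < y \<Longrightarrow> y \<le> y' \<Longrightarrow> G y \<le> G y'"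
  using gain_strict_mono[of y y'] by (cases "y = y'") auto

lemma mult_gain_strict_mono:
  assumes "0 < a" "0 < b" "a \<le> a'" "b \<le> b'" "a < a' \<or> b < b'"
  shows "a * G b < a' * G b'"
  using assms(5)
proof
  assume "a < a'"
  then have "a * G b < a' * G b"
    using gain_pos[OF assms(2)] by simp
  also have "\<dots> \<le> a' * G b'"
    using gain_mono[OF assms(2,4)] assms(1,3) by simp
  finally show ?thesis .
next
  assume "b < b'"
  then show ?thesis
    using gain_strict_mono[OF assms(2)] assms(1,3) gain_pos[OF assms(2)]
    by (intro mult_le_less_imp_less) auto
qed

end

text \<open>For a 2x2 table with cell masses c_ij, this is the factor by which an EM step multiplies the
  odds ratio of the first feature when the second feature has odds ratio y.\<close>

definition moebius_gain :: "real \<Rightarrow> real \<Rightarrow> real \<Rightarrow> real \<Rightarrow> real \<Rightarrow> real" where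
  "moebius_gain c00 c01 c10 c11 y = ((c00 + c01) * (c11 * y + c10)) / ((c10 + c11) * (c01 * y + c00))"

lemma moebius_gain_inverse_arg:
  assumes "0 < y"
  shows "moebius_gain c00 c01 c10 c11 y = moebius_gain c01 c00 c11 c10 (1 / y)"
proof -
  have "c11 * y + c10 = (c10 * (1 / y) + c11) * y" "c01 * y + c00 = (c00 * (1 / y) + c01) * y"
    using assms by (simp_all add: algebra_simps)
  then show ?thesis
    using assms unfolding moebius_gain_def by (simp add: ac_simps)
qed

lemma moebius_gain_reciprocal: "1 / moebius_gain c00 c01 c10 c11 y = moebius_gain c10 c11 c00 c01 y"
  unfolding moebius_gain_def by simp

lemma moebius_gain_ratio:
  assumes "p \<noteq> 0"
  shows "moebius_gain c00 c01 c10 c11 (q / p)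
    = (c00 + c01) / (c10 + c11) * ((c10 * p + c11 * q) / (c00 * p + c01 * q))"
proof -
  have "c11 * (q / p) + c10 = (c10 * p + c11 * q) / p" "c01 * (q / p) + c00 = (c00 * p + c01 * q) / p"
    using assms by (simp_all add: field_simps)
  then show ?thesis
    unfolding moebius_gain_def using assms by (simp add: divide_divide_times_eq)
qed

locale concordant_table =
  fixes c00 c01 c10 c11 :: real
  assumes cells_nonneg: "0 \<le> c00" "0 \<le> c01" "0 \<le> c10" "0 \<le> c11"
    and concordant: "c10 * c01 < c11 * c00"
begin

abbreviation "G \<equiv> moebius_gain c00 c01 c10 c11"
abbreviation "table_det \<equiv> c11 * c00 - c10 * c01"

lemma corner_cells_pos: "0 < c00" "0 < c11"
proof -
  have "0 < c11 * c00"
    using concordant mult_nonneg_nonneg[OF cells_nonneg(3,2)] by linarith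
  then show "0 < c00" "0 < c11"
    using cells_nonneg by (auto simp: zero_less_mult_iff)
qed

lemma row_sums_pos: "0 < c00 + c01" "0 < c10 + c11"
  using corner_cells_pos cells_nonneg by auto

lemma denominator_pos: "0 < y \<Longrightarrow> 0 < c01 * y + c00"
  using corner_cells_pos cells_nonneg by (simp add: add_nonneg_pos)

lemma gain_minus_one:
  assumes "0 < y"
  shows "G y - 1 = table_det * (y - 1) / ((c10 + c11) * (c01 * y + c00))"
proof -
  have "(c10 + c11) * (c01 * y + c00) \<noteq> 0"
    using denominator_pos[OF assms] row_sums_pos by simp
  then have "G y - 1 = ((c00 + c01) * (c11 * y + c10) - (c10 + c11) * (c01 * y + c00))
      / ((c10 + c11) * (c01 * y + c00))"
    unfolding moebius_gain_def by (simp add: diff_divide_distrib)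
  also have "(c00 + c01) * (c11 * y + c10) - (c10 + c11) * (c01 * y + c00) = table_det * (y - 1)"
    by (simp add: algebra_simps)
  finally show ?thesis .
qed

lemma arg_minus_gain:
  assumes "0 < y"
  shows "y - G y = (y - 1) * (c01 * (c10 + c11) * y + c10 * (c00 + c01))
    / ((c10 + c11) * (c01 * y + c00))"
proof -
  have "(c10 + c11) * (c01 * y + c00) \<noteq> 0"
    using denominator_pos[OF assms] row_sums_pos by simp
  then have "y - G y = (y * ((c10 + c11) * (c01 * y + c00)) - (c00 + c01) * (c11 * y + c10))
      / ((c10 + c11) * (c01 * y + c00))"
    unfolding moebius_gain_def by (simp add: diff_divide_distrib)
  also have "y * ((c10 + c11) * (c01 * y + c00)) - (c00 + c01) * (c11 * y + c10)
      = (y - 1) * (c01 * (c10 + c11) * y + c10 * (c00 + c01))"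
    by (simp add: algebra_simps)
  finally show ?thesis .
qed

lemma gain_diff:
  assumes "0 < y" "0 < y'"
  shows "G y' - G y
    = (c00 + c01) * table_det * (y' - y) / ((c10 + c11) * ((c01 * y' + c00) * (c01 * y + c00)))"
proof -
  have G_eq: "G z = (c00 + c01) / (c10 + c11) * ((c11 * z + c10) / (c01 * z + c00))" for z
    unfolding moebius_gain_def by simp
  have "c01 * y + c00 \<noteq> 0" "c01 * y' + c00 \<noteq> 0"
    using denominator_pos assms by (auto simp: less_le)
  then have "(c11 * y' + c10) / (c01 * y' + c00) - (c11 * y + c10) / (c01 * y + c00)
      = table_det * (y' - y) / ((c01 * y' + c00) * (c01 * y + c00))"
    by (simp add: diff_frac_eq) (simp add: algebra_simps)
  then have "G y' - G y
      = (c00 + c01) / (c10 + c11) * (table_det * (y' - y) / ((c01 * y' + c00) * (c01 * y + c00)))"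
    unfolding G_eq right_diff_distrib[symmetric] by simp
  then show ?thesis
    by (simp add: times_divide_times_eq mult.assoc)
qed

lemma gain_above_one:
  assumes "1 \<le> y"
  shows "1 \<le> G y \<and> G y \<le> y"
proof -
  have den: "0 < (c10 + c11) * (c01 * y + c00)"
    using denominator_pos[of y] row_sums_pos assms by simp
  have "0 \<le> G y - 1"
    unfolding gain_minus_one[OF order.strict_trans2[OF zero_less_one assms]]
    using assms concordant den by simp
  moreover have "0 \<le> y - G y"
    unfolding arg_minus_gain[OF order.strict_trans2[OF zero_less_one assms]]
    using assms cells_nonneg den by (intro divide_nonneg_pos mult_nonneg_nonneg add_nonneg_nonneg) auto
  ultimately show ?thesis by simp
qed

lemma gain_below_one:
  assumes "0 < y" "y \<le> 1"
  shows "y \<le> G y \<and> G y \<le> 1"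
proof -
  have den: "0 < (c10 + c11) * (c01 * y + c00)"
    using denominator_pos[of y] row_sums_pos assms by simp
  have "G y - 1 \<le> 0"
    unfolding gain_minus_one[OF assms(1)] using assms concordant den
    by (intro divide_nonpos_pos mult_nonneg_nonpos) auto
  moreover have "y - G y \<le> 0"
    unfolding arg_minus_gain[OF assms(1)] using assms cells_nonneg den
    by (intro divide_nonpos_pos mult_nonpos_nonneg add_nonneg_nonneg mult_nonneg_nonneg) auto
  ultimately show ?thesis by simp
qed

lemma gain_strict_mono:
  assumes "0 < y" "y < y'"
  shows "G y < G y'"
proof -
  have "0 < G y' - G y"
    unfolding gain_diff[OF assms(1) order.strict_trans[OF assms]]
    using assms concordant row_sums_pos denominator_pos[of y] denominator_pos[of y']
    by (intro divide_pos_pos mult_pos_pos) auto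
  then show ?thesis by simp
qed

lemma gain_increase_below_one:
  assumes "0 < y" "y \<le> y'" "y' \<le> 1"
  shows "table_det / ((c10 + c11) * (c00 + c01)) * (y' - y) \<le> G y' - G y"
proof -
  have y': "0 < y'" using assms by simp
  have den_le: "c01 * z + c00 \<le> c00 + c01" if "z \<le> 1" for z
    using that cells_nonneg mult_left_le[of z c01] by linarith
  have "(c01 * y' + c00) * (c01 * y + c00) \<le> (c00 + c01) * (c00 + c01)"
    using den_le assms denominator_pos[OF assms(1)] denominator_pos[OF y'] row_sums_pos
    by (intro mult_mono) auto
  then have "(c10 + c11) * ((c01 * y' + c00) * (c01 * y + c00)) \<le> (c10 + c11) * ((c00 + c01) * (c00 + c01))"
    using row_sums_pos by simp
  moreover have "0 < (c10 + c11) * ((c01 * y' + c00) * (c01 * y + c00))"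
    using row_sums_pos denominator_pos[OF assms(1)] denominator_pos[OF y'] by simp
  moreover have "0 \<le> (c00 + c01) * table_det * (y' - y)"
    using row_sums_pos concordant assms by simp
  ultimately have "(c00 + c01) * table_det * (y' - y) / ((c10 + c11) * ((c00 + c01) * (c00 + c01)))
      \<le> G y' - G y"
    unfolding gain_diff[OF assms(1) y'] by (intro divide_left_mono) auto
  moreover have "(c00 + c01) * table_det * (y' - y) / ((c10 + c11) * ((c00 + c01) * (c00 + c01)))
      = table_det / ((c10 + c11) * (c00 + c01)) * (y' - y)"
    using row_sums_pos(1) by (simp add: mult.commute mult.left_commute)
  ultimately show ?thesis by simp
qed

lemma gain_is_odds_gain: "odds_gain G (table_det / ((c10 + c11) * (c00 + c01)))"
  using gain_above_one gain_below_one gain_strict_mono gain_increase_below_one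
    concordant row_sums_pos
  by unfold_locales simp_all

end

lemma concordant_table_transpose:
  "concordant_table c00 c01 c10 c11 \<Longrightarrow> concordant_table c00 c10 c01 c11"
  unfolding concordant_table_def by (simp add: mult.commute)

section \<open>Coupled multiplicative dynamics\<close>

definition coupled_orbit ::
    "(real \<Rightarrow> real) \<Rightarrow> (real \<Rightarrow> real) \<Rightarrow> (nat \<Rightarrow> real) \<Rightarrow> (nat \<Rightarrow> real) \<Rightarrow> bool" where
  "coupled_orbit G1 G2 a b \<longleftrightarrow> (\<forall>t. a (Suc t) = a t * G1 (b t) \<and> b (Suc t) = b t * G2 (a t))"

definition avoids_escape_quadrants :: "(nat \<Rightarrow> real) \<Rightarrow> (nat \<Rightarrow> real) \<Rightarrow> bool" where
  "avoids_escape_quadrants a b \<longleftrightarrow> (\<forall>t. (a t - 1) * (b t - 1) \<le> 0)"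

lemma coupled_orbitD:
  assumes "coupled_orbit G1 G2 a b"
  shows "a (Suc t) = a t * G1 (b t)" "b (Suc t) = b t * G2 (a t)"
  using assms unfolding coupled_orbit_def by auto

lemma coupled_orbit_shift:
  "coupled_orbit G1 G2 a b \<Longrightarrow> coupled_orbit G1 G2 (\<lambda>t. a (T + t)) (\<lambda>t. b (T + t))"
  unfolding coupled_orbit_def by simp

lemma coupled_orbit_swap: "coupled_orbit G1 G2 a b \<longleftrightarrow> coupled_orbit G2 G1 b a"
  unfolding coupled_orbit_def by auto

lemma avoids_escape_quadrants_shift:
  "avoids_escape_quadrants a b \<Longrightarrow> avoids_escape_quadrants (\<lambda>t. a (T + t)) (\<lambda>t. b (T + t))"
  unfolding avoids_escape_quadrants_def by simp

lemma avoids_escape_quadrants_swap: "avoids_escape_quadrants a b \<longleftrightarrow> avoids_escape_quadrants b a"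
  unfolding avoids_escape_quadrants_def by (simp add: mult.commute)

lemma avoiding_step:
  assumes G1: "odds_gain G1 k1" and G2: "odds_gain G2 k2"
    and "1 \<le> a" "0 < b" "b \<le> 1" and avoid: "(a * G1 b - 1) * (b * G2 a - 1) \<le> 0"
  shows "1 \<le> a * G1 b \<and> a * G1 b \<le> a \<and> b \<le> b * G2 a \<and> b * G2 a \<le> 1"
proof -
  have "b \<le> G1 b" "G1 b \<le> 1" "1 \<le> G2 a" "G2 a \<le> a"
    using odds_gain.gain_below_one[OF G1] odds_gain.gain_above_one[OF G2] assms by auto
  then have ranges: "a * b \<le> a * G1 b" "a * G1 b \<le> a" "b \<le> b * G2 a" "b * G2 a \<le> b * a"
    using assms by (auto intro: mult_left_mono simp: mult_left_le mult_le_cancel_left1)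
  have "1 \<le> a * G1 b"
  proof (rule ccontr)
    assume "\<not> 1 \<le> a * G1 b"
    then have "0 < (a * G1 b - 1) * (b * G2 a - 1)"
      using ranges by (intro mult_neg_neg) (auto simp: mult.commute)
    then show False using avoid by simp
  qed
  moreover have "b * G2 a \<le> 1"
  proof (rule ccontr)
    assume "\<not> b * G2 a \<le> 1"
    then have "0 < (a * G1 b - 1) * (b * G2 a - 1)"
      using ranges by (intro mult_pos_pos) (auto simp: mult.commute)
    then show False using avoid by simp
  qed
  ultimately show ?thesis using ranges by simp
qed

lemma avoiding_orbit_bounds:
  assumes G1: "odds_gain G1 k1" and G2: "odds_gain G2 k2"
    and orbit: "coupled_orbit G1 G2 a b" and avoid: "avoids_escape_quadrants a b"
    and start: "1 \<le> a 0" "0 < b 0" "b 0 \<le> 1"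
  shows "1 \<le> a t \<and> a t \<le> a 0 \<and> 0 < b t \<and> b t \<le> 1"
proof (induction t)
  case 0
  then show ?case using start by simp
next
  case (Suc t)
  note eqs = coupled_orbitD[OF orbit, of t]
  have "(a t * G1 (b t) - 1) * (b t * G2 (a t) - 1) \<le> 0"
    using avoid eqs unfolding avoids_escape_quadrants_def by metis
  then have "1 \<le> a t * G1 (b t) \<and> a t * G1 (b t) \<le> a t \<and> b t \<le> b t * G2 (a t) \<and> b t * G2 (a t) \<le> 1"
    using Suc by (intro avoiding_step[OF G1 G2]) auto
  then show ?case
    unfolding eqs using Suc by linarith
qed

lemma avoiding_orbits_gap:
  assumes G1: "odds_gain G1 k1" and G2: "odds_gain G2 k2"
    and orbit: "coupled_orbit G1 G2 a b" "coupled_orbit G1 G2 a' b'"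
    and bounds: "\<And>t. 1 \<le> a t \<and> 0 < b t" "\<And>t. 0 < b' t"
    and start: "a 0 \<le> a' 0" "b 0 \<le> b' 0"
  shows "a t \<le> a' t \<and> b' 0 - b 0 \<le> b' t - b t"
proof (induction t)
  case 0
  then show ?case using start by simp
next
  case (Suc t)
  have "b t \<le> b' t" "0 < a t" "0 \<le> a' t" using Suc start bounds(1)[of t] by auto
  then have "a t * G1 (b t) \<le> a' t * G1 (b' t)"
    using Suc bounds odds_gain.gain_mono[OF G1] odds_gain.gain_pos[OF G1]
    by (intro mult_mono) (auto intro: less_imp_le)
  moreover have "b' t * G2 (a' t) - b t * G2 (a t) \<ge> (b' t - b t) * G2 (a t)"
    using odds_gain.gain_mono[OF G2, of "a t" "a' t"] \<open>0 < a t\<close> Suc bounds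
    by (simp add: algebra_simps mult_left_mono)
  moreover have "(b' t - b t) * G2 (a t) \<ge> b' t - b t"
    using odds_gain.gain_above_one[OF G2] bounds \<open>b t \<le> b' t\<close> by (simp add: mult_le_cancel_left1)
  ultimately show ?case
    using Suc coupled_orbitD[OF orbit(1), of t] coupled_orbitD[OF orbit(2), of t] by simp
qed

lemma separated_orbits_ratio_growth:
  assumes G1: "odds_gain G1 k1"
    and orbit: "coupled_orbit G1 G2 a b" "coupled_orbit G1 G2 a' b'"
    and bounds: "\<And>t. 1 \<le> a t \<and> 0 < b t \<and> b t \<le> 1" "\<And>t. 0 \<le> a' t \<and> b' t \<le> 1"
    and gap: "0 \<le> \<delta>" "\<And>t. \<delta> \<le> b' t - b t" and start: "a 0 \<le> a' 0"
  shows "a t * (1 + k1 * \<delta>) ^ t \<le> a' t"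
proof (induction t)
  case 0
  then show ?case using start by simp
next
  case (Suc t)
  have "0 < G1 (b t)" "G1 (b t) \<le> 1"
    using odds_gain.gain_pos[OF G1, of "b t"] odds_gain.gain_below_one[OF G1, of "b t"] bounds(1)[of t]
    by auto
  then have "G1 (b t) * (k1 * \<delta>) \<le> k1 * \<delta>"
    using odds_gain.rate_pos[OF G1] gap(1) by (simp add: mult_left_le_one_le)
  also have "\<dots> \<le> k1 * (b' t - b t)"
    using gap(2)[of t] odds_gain.rate_pos[OF G1] by simp
  also have "\<dots> \<le> G1 (b' t) - G1 (b t)"
    using odds_gain.gain_increase_below_one[OF G1, of "b t" "b' t"] bounds(1,2)[of t] gap(1) gap(2)[of t]
    by simp
  finally have gain_gap: "G1 (b t) * (1 + k1 * \<delta>) \<le> G1 (b' t)"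
    by (simp add: algebra_simps)
  have "a (Suc t) * (1 + k1 * \<delta>) ^ Suc t = (a t * (1 + k1 * \<delta>) ^ t) * (G1 (b t) * (1 + k1 * \<delta>))"
    using coupled_orbitD[OF orbit(1)] by (simp add: ac_simps)
  also have "\<dots> \<le> a' t * G1 (b' t)"
    using Suc gain_gap bounds(1,2)[of t] \<open>0 < G1 (b t)\<close> odds_gain.rate_pos[OF G1] gap(1)
    by (intro mult_mono) auto
  finally show ?case
    using coupled_orbitD[OF orbit(2)] by simp
qed

lemma avoiding_orbits_not_separated:
  assumes G1: "odds_gain G1 k1" and G2: "odds_gain G2 k2"
    and orbit: "coupled_orbit G1 G2 a b" "coupled_orbit G1 G2 a' b'"
    and avoid: "avoids_escape_quadrants a b" "avoids_escape_quadrants a' b'"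
    and start: "1 \<le> a 0" "0 < b 0" "b 0 \<le> 1" "a 0 < a' 0" "b 0 < b' 0"
  shows False
proof -
  have "(a' 0 - 1) * (b' 0 - 1) \<le> 0" "0 < a' 0 - 1"
    using avoid(2) start unfolding avoids_escape_quadrants_def by auto
  then have "b' 0 \<le> 1" by (simp add: mult_le_0_iff)
  have bounds: "1 \<le> a t \<and> a t \<le> a 0 \<and> 0 < b t \<and> b t \<le> 1" for t
    by (rule avoiding_orbit_bounds[OF G1 G2 orbit(1) avoid(1) start(1-3)])
  have bounds': "1 \<le> a' t \<and> a' t \<le> a' 0 \<and> 0 < b' t \<and> b' t \<le> 1" for t
    by (rule avoiding_orbit_bounds[OF G1 G2 orbit(2) avoid(2)]) (use start \<open>b' 0 \<le> 1\<close> in auto)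
  define q where "q = 1 + k1 * (b' 0 - b 0)"
  have gap: "a t \<le> a' t \<and> b' 0 - b 0 \<le> b' t - b t" for t
    by (rule avoiding_orbits_gap[OF G1 G2 orbit]) (use bounds bounds' start in \<open>auto simp: less_imp_le\<close>)
  moreover have "0 \<le> a' t \<and> b' t \<le> 1" for t
    using bounds'[of t] by simp
  ultimately have growth: "a t * q ^ t \<le> a' t" for t
    unfolding q_def using bounds start
    by (intro separated_orbits_ratio_growth[OF G1 orbit]) simp_all
  \<comment> \<open>so a' / a grows geometrically, although a' is bounded by a' 0 and a stays above 1\<close>
  have "1 < q"
    unfolding q_def using odds_gain.rate_pos[OF G1] start by simp
  then obtain n where "a' 0 < q ^ n"
    using real_arch_pow by blast
  moreover have "q ^ n \<le> a n * q ^ n"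
    using bounds[of n] \<open>1 < q\<close> by simp
  ultimately show False
    using growth[of n] bounds'[of n] by linarith
qed

lemma avoiding_orbits_incomparable:
  assumes G1: "odds_gain G1 k1" and G2: "odds_gain G2 k2"
    and orbit: "coupled_orbit G1 G2 a b" "coupled_orbit G1 G2 a' b'"
    and avoid: "avoids_escape_quadrants a b" "avoids_escape_quadrants a' b'"
    and pos: "0 < a 0" "0 < b 0" and le: "a 0 \<le> a' 0" "b 0 \<le> b' 0"
  shows "a 0 = a' 0 \<and> b 0 = b' 0"
proof (rule ccontr)
  assume "\<not> (a 0 = a' 0 \<and> b 0 = b' 0)"
  then have "a 0 < a' 0 \<or> b 0 < b' 0" using le by auto
  then have strict: "a 1 < a' 1" "b 1 < b' 1"
    using odds_gain.mult_gain_strict_mono[OF G1, of "a 0" "b 0" "a' 0" "b' 0"]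
      odds_gain.mult_gain_strict_mono[OF G2, of "b 0" "a 0" "b' 0" "a' 0"] pos le
      coupled_orbitD[OF orbit(1), of 0] coupled_orbitD[OF orbit(2), of 0]
    by auto
  have pos1: "0 < a 1" "0 < b 1"
    using pos odds_gain.gain_pos[OF G1, of "b 0"] odds_gain.gain_pos[OF G2, of "a 0"]
      coupled_orbitD[OF orbit(1), of 0] by simp_all
  let ?a = "\<lambda>t. a (Suc t)" and ?b = "\<lambda>t. b (Suc t)"
  let ?a' = "\<lambda>t. a' (Suc t)" and ?b' = "\<lambda>t. b' (Suc t)"
  have orbit1: "coupled_orbit G1 G2 ?a ?b" "coupled_orbit G1 G2 ?a' ?b'"
    using coupled_orbit_shift[OF orbit(1), of 1] coupled_orbit_shift[OF orbit(2), of 1] by simp_all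
  have avoid1: "avoids_escape_quadrants ?a ?b" "avoids_escape_quadrants ?a' ?b'"
    using avoids_escape_quadrants_shift[OF avoid(1), of 1] avoids_escape_quadrants_shift[OF avoid(2), of 1]
    by simp_all
  have "(a 1 - 1) * (b 1 - 1) \<le> 0"
    using avoid(1) unfolding avoids_escape_quadrants_def by blast
  then have "(1 \<le> a 1 \<and> b 1 \<le> 1) \<or> (1 \<le> b 1 \<and> a 1 \<le> 1)"
    by (auto simp: mult_le_0_iff)
  then show False
  proof
    assume "1 \<le> a 1 \<and> b 1 \<le> 1"
    then show False
      using avoiding_orbits_not_separated[OF G1 G2 orbit1 avoid1] strict pos1 by simp
  next
    assume "1 \<le> b 1 \<and> a 1 \<le> 1"
    then show False
      using avoiding_orbits_not_separated[OF G2 G1 orbit1[THEN coupled_orbit_swap[THEN iffD1]]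
          avoid1[THEN avoids_escape_quadrants_swap[THEN iffD1]]] strict pos1 by simp
  qed
qed

lemma escaping_orbit_above:
  assumes G1: "odds_gain G1 k1" and G2: "odds_gain G2 k2"
    and orbit: "coupled_orbit G1 G2 a b" and start: "1 < a 0" "1 < b 0"
  shows "a 0 \<le> a t \<and> b 0 \<le> b t"
proof (induction t)
  case (Suc t)
  then have "1 \<le> G1 (b t)" "1 \<le> G2 (a t)"
    using odds_gain.gain_above_one[OF G1, of "b t"] odds_gain.gain_above_one[OF G2, of "a t"] start
    by auto
  then have "a t \<le> a t * G1 (b t)" "b t \<le> b t * G2 (a t)"
    using Suc start by (simp_all add: mult_le_cancel_left1)
  then show ?case
    using Suc coupled_orbitD[OF orbit, of t] by simp
qed simp

lemma escaping_orbit_below: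
  assumes G1: "odds_gain G1 k1" and G2: "odds_gain G2 k2"
    and orbit: "coupled_orbit G1 G2 a b" and start: "0 < a 0" "a 0 < 1" "0 < b 0" "b 0 < 1"
  shows "0 < a t \<and> a t \<le> a 0 \<and> 0 < b t \<and> b t \<le> b 0"
proof (induction t)
  case (Suc t)
  then have "0 < G1 (b t)" "G1 (b t) \<le> 1" "0 < G2 (a t)" "G2 (a t) \<le> 1"
    using odds_gain.gain_below_one[OF G1, of "b t"] odds_gain.gain_below_one[OF G2, of "a t"]
      odds_gain.gain_pos[OF G1, of "b t"] odds_gain.gain_pos[OF G2, of "a t"] start by auto
  then have "0 < a t * G1 (b t)" "a t * G1 (b t) \<le> a t" "0 < b t * G2 (a t)" "b t * G2 (a t) \<le> b t"
    using Suc by (simp_all add: mult_left_le)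
  then show ?case
    unfolding coupled_orbitD[OF orbit] using Suc by linarith
qed (use start in simp)

section \<open>Null sets and growth rates\<close>

lemma abs_add_opposite: "u * w < 0 \<Longrightarrow> \<bar>u\<bar> + \<bar>w\<bar> = \<bar>u - w :: real\<bar>"
  by (auto simp: mult_less_0_iff)

lemma norm_le_discordant_projection:
  fixes x y :: "real^2"
  assumes s: "\<bar>s\<bar> = 1" and discordant: "s * (x$1 - y$1) * (x$2 - y$2) < 0"
  shows "norm (x - y) \<le> \<bar>(x$1 - s * x$2) - (y$1 - s * y$2)\<bar>"
proof -
  have opposite: "(x$1 - y$1) * (s * (x$2 - y$2)) < 0"
    using discordant by (simp add: ac_simps)
  have "norm (x - y) \<le> \<bar>x$1 - y$1\<bar> + \<bar>x$2 - y$2\<bar>"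
    using norm_le_l1_cart[of "x - y"] by (simp add: sum_2)
  also have "\<dots> = \<bar>x$1 - y$1\<bar> + \<bar>s * (x$2 - y$2)\<bar>"
    using s by (simp add: abs_mult)
  also have "\<dots> = \<bar>(x$1 - y$1) - s * (x$2 - y$2)\<bar>"
    using opposite by (rule abs_add_opposite)
  finally show ?thesis
    by (simp add: algebra_simps)
qed

lemma negligible_discordant_set:
  fixes S :: "(real^2) set"
  assumes s: "\<bar>s\<bar> = 1"
    and discordant: "\<And>x y. x \<in> S \<Longrightarrow> y \<in> S \<Longrightarrow> x \<noteq> y \<Longrightarrow> s * (x$1 - y$1) * (x$2 - y$2) < 0"
  shows "negligible S"
proof -
  \<comment> \<open>the projection g onto a coordinate axis is injective on S with a 1-Lipschitz inverse\<close>
  define g :: "real^2 \<Rightarrow> real^2" where "g x = (x$1 - s * x$2) *\<^sub>R axis 1 1" for x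
  have expanding: "norm (x - y) \<le> norm (g x - g y)" if "x \<in> S" "y \<in> S" for x y
  proof (cases "x = y")
    case False
    have "norm (g x - g y) = \<bar>(x$1 - s * x$2) - (y$1 - s * y$2)\<bar>"
      unfolding g_def scaleR_diff_left[symmetric] by simp
    then show ?thesis
      using norm_le_discordant_projection[OF s discordant[OF that False]] by simp
  qed simp
  then have inj: "inj_on g S"
    by (intro inj_onI) (metis norm_eq_zero right_minus_eq norm_le_zero_iff)
  have "negligible (g ` S)"
    by (rule negligible_subset[OF negligible_standard_hyperplane_cart[of 2]]) (auto simp: g_def axis_def)
  then have "negligible (the_inv_into S g ` g ` S)"
  proof (rule negligible_locally_Lipschitz_image[OF order_refl])
    fix z assume "z \<in> g ` S"
    then obtain x where x: "x \<in> S" "z = g x" by auto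
    show "\<exists>T B. open T \<and> z \<in> T \<and>
        (\<forall>y\<in>g ` S \<inter> T. norm (the_inv_into S g y - the_inv_into S g z) \<le> B * norm (y - z))"
    proof (intro exI[of _ UNIV] exI[of _ 1] conjI ballI)
      fix y assume "y \<in> g ` S \<inter> UNIV"
      then obtain x' where x': "x' \<in> S" "y = g x'" by auto
      show "norm (the_inv_into S g y - the_inv_into S g z) \<le> 1 * norm (y - z)"
        using expanding[OF x'(1) x(1)] x x' inj by (simp add: the_inv_into_f_f)
    qed auto
  qed
  then show ?thesis
    using inj by (simp add: the_inv_into_onto)
qed

lemma prod_tendsto_at_top_if_eventually_ge:
  fixes Z :: "nat \<Rightarrow> real"
  assumes pos: "\<And>s. 0 < Z s" and z: "1 < z" and ge: "\<And>s. T \<le> s \<Longrightarrow> z \<le> Z s"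
  shows "filterlim (\<lambda>t. \<Prod>s<t. Z s) at_top sequentially"
proof (rule filterlim_at_top_mono)
  define c where "c = (\<Prod>s<T. Z s) / z ^ T"
  have "0 < c"
    unfolding c_def using pos z by (simp add: prod_pos)
  show "filterlim (\<lambda>t. c * z ^ t) at_top sequentially"
    using filterlim_realpow_sequentially_gt1[of z] z \<open>0 < c\<close>
    by (intro filterlim_tendsto_pos_mult_at_top[OF tendsto_const] filterlim_at_infinity_imp_filterlim_at_top)
      auto
  show "\<forall>\<^sub>F t in sequentially. c * z ^ t \<le> (\<Prod>s<t. Z s)"
    unfolding eventually_sequentially
  proof (intro exI allI impI)
    fix t assume "T \<le> t"
    then show "c * z ^ t \<le> (\<Prod>s<t. Z s)"
    proof (induction t rule: dec_induct)
      case base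
      then show ?case unfolding c_def using z by simp
    next
      case (step t)
      then have "c * z ^ t * z \<le> (\<Prod>s<t. Z s) * Z t"
        using ge \<open>0 < c\<close> z pos by (intro mult_mono) (auto intro: prod_nonneg less_imp_le)
      then show ?case by (simp add: ac_simps)
    qed
  qed
qed

lemma linear_rate_if_eventually_zero:
  fixes d :: "nat \<Rightarrow> real"
  assumes nonneg: "\<And>t. 0 \<le> d t" and zero: "\<And>t. T \<le> t \<Longrightarrow> d t = 0"
  shows "\<exists>C r. 0 < r \<and> r < 1 \<and> (\<forall>t. d t \<le> C * r ^ t)"
proof (intro exI conjI allI)
  define C where "C = (\<Sum>t<T. d t * 2 ^ t)"
  fix t
  show "d t \<le> C * (1 / 2) ^ t"
  proof (cases "t < T")
    case True
    have "d t * 2 ^ t \<le> C"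
      unfolding C_def using True nonneg by (intro member_le_sum) auto
    then show ?thesis by (simp add: power_one_over field_simps)
  next
    case False
    have "0 \<le> C" unfolding C_def using nonneg by (simp add: sum_nonneg)
    then show ?thesis using zero[of t] False by simp
  qed
qed auto

section \<open>Odds ratios and the reweighted table\<close>

definition odds_ratio :: "real \<Rightarrow> real \<Rightarrow> real" where
  "odds_ratio x y = (y / (1 - y)) / (x / (1 - x))"

lemma odds_ratio_pos: "0 < x \<Longrightarrow> x < 1 \<Longrightarrow> 0 < y \<Longrightarrow> y < 1 \<Longrightarrow> 0 < odds_ratio x y"
  unfolding odds_ratio_def by simp

lemma odds_ratio_self: "0 < x \<Longrightarrow> x < 1 \<Longrightarrow> odds_ratio x x = 1"
  unfolding odds_ratio_def by simp

lemma odds_ratio_complement: "odds_ratio (1 - x) (1 - y) = 1 / odds_ratio x y"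
  unfolding odds_ratio_def by simp

lemma odds_ratio_less_iff:
  assumes "0 < x" "x < 1" "y < 1" "y' < 1"
  shows "odds_ratio x y < odds_ratio x y' \<longleftrightarrow> y < y'"
proof -
  have odds: "odds_ratio x z = (inverse (1 - z) - 1) * ((1 - x) / x)" if "z < 1" for z
    unfolding odds_ratio_def using that by (simp add: field_simps)
  have "inverse (1 - y) < inverse (1 - y') \<longleftrightarrow> y < y'"
    using assms by (subst inverse_less_iff_less) auto
  moreover have "0 < (1 - x) / x"
    using assms by simp
  ultimately show ?thesis
    unfolding odds[OF assms(3)] odds[OF assms(4)] by (simp only: mult_less_cancel_right_pos) simp
qed

lemma odds_ratio_le_iff:
  "0 < x \<Longrightarrow> x < 1 \<Longrightarrow> y < 1 \<Longrightarrow> y' < 1 \<Longrightarrow> odds_ratio x y \<le> odds_ratio x y' \<longleftrightarrow> y \<le> y'"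
  using odds_ratio_less_iff[of x y' y] by (simp add: not_less[symmetric])

lemma odds_ratio_gt_one_iff: "0 < x \<Longrightarrow> x < 1 \<Longrightarrow> y < 1 \<Longrightarrow> 1 < odds_ratio x y \<longleftrightarrow> x < y"
  using odds_ratio_less_iff[of x x y] odds_ratio_self[of x] by simp

lemma odds_ratio_lt_one_iff: "0 < x \<Longrightarrow> x < 1 \<Longrightarrow> y < 1 \<Longrightarrow> odds_ratio x y < 1 \<longleftrightarrow> y < x"
  using odds_ratio_less_iff[of x y x] odds_ratio_self[of x] by simp

lemma nonneg_weights_pos:
  fixes a b p q :: real
  assumes "0 \<le> a" "0 \<le> b" "0 < a + b" "0 < p" "0 < q"
  shows "0 < a * p + b * q"
proof (cases "0 < a")
  case True
  then show ?thesis using assms by (simp add: add_pos_nonneg)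
next
  case False
  then show ?thesis using assms by (simp add: add_nonneg_pos)
qed

lemma odds_ratio_of_fraction:
  fixes N0 N1 :: real
  assumes "0 < N0" "0 < N1"
  shows "odds_ratio x (N1 / (N0 + N1)) = N1 / N0 / (x / (1 - x))"
proof -
  have "1 - N1 / (N0 + N1) = N0 / (N0 + N1)"
    using assms by (simp add: field_simps)
  then show ?thesis
    unfolding odds_ratio_def using assms by simp
qed

text \<open>N0 and N1 are the masses of the rows x_1 = 0 and x_1 = 1 of the table after reweighting by the
  likelihood ratios (1 - u) / (1 - x), u / x of the first feature and p, q of the second.\<close>

lemma odds_ratio_em_update:
  fixes c00 c01 c10 c11 :: real
  assumes cells: "0 \<le> c00" "0 \<le> c01" "0 \<le> c10" "0 \<le> c11"
    and x: "x = c10 + c11" "1 - x = c00 + c01" "0 < x" "x < 1"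
    and u: "0 < u" "u < 1" and pq: "0 < p" "0 < q"
  defines "N0 \<equiv> (1 - u) / (1 - x) * (c00 * p + c01 * q)" and "N1 \<equiv> u / x * (c10 * p + c11 * q)"
  shows "odds_ratio x (N1 / (N0 + N1)) = odds_ratio x u * moebius_gain c00 c01 c10 c11 (q / p)"
proof -
  define A B where "A = c10 * p + c11 * q" and "B = c00 * p + c01 * q"
  have "0 < A" "0 < B"
    unfolding A_def B_def using cells x pq by (simp_all add: nonneg_weights_pos)
  then have "0 < N0" "0 < N1"
    unfolding N0_def N1_def A_def[symmetric] B_def[symmetric] using x u by simp_all
  have "N1 / N0 = u / (1 - u) * ((1 - x) / x) * (A / B)"
    unfolding N0_def N1_def A_def[symmetric] B_def[symmetric] using x u \<open>0 < B\<close> by (simp add: field_simps)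
  moreover have "moebius_gain c00 c01 c10 c11 (q / p) = (1 - x) / x * (A / B)"
    unfolding moebius_gain_ratio[OF less_imp_neq[OF pq(1), symmetric]] A_def B_def x(1,2)[symmetric]
    by simp
  ultimately show ?thesis
    unfolding odds_ratio_of_fraction[OF \<open>0 < N0\<close> \<open>0 < N1\<close>]
    by (simp add: odds_ratio_def ac_simps)
qed

text \<open>The left-hand side is the total mass of a 2x2 table with marginals x, y and covariance s after
  reweighting by the likelihood ratios of Bernoulli means a and b.\<close>

lemma reweighted_table_total:
  fixes x y a b s :: real
  assumes "x \<noteq> 0" "1 - x \<noteq> 0" "y \<noteq> 0" "1 - y \<noteq> 0"
  shows "((1 - x) * (1 - y) + s) * ((1 - a) / (1 - x)) * ((1 - b) / (1 - y))
       + ((1 - x) * y - s) * ((1 - a) / (1 - x)) * (b / y)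
       + (x * (1 - y) - s) * (a / x) * ((1 - b) / (1 - y))
       + (x * y + s) * (a / x) * (b / y)
     = 1 + s * (a - x) * (b - y) / (x * (1 - x) * y * (1 - y))"
proof -
  have bilinear: "((1 - x) * (1 - y) + s) * A0 * B0 + ((1 - x) * y - s) * A0 * B1
      + (x * (1 - y) - s) * A1 * B0 + (x * y + s) * A1 * B1
    = (A0 * (1 - x) + A1 * x) * (B0 * (1 - y) + B1 * y) + s * (A1 - A0) * (B1 - B0)" for A0 A1 B0 B1
    by (simp add: algebra_simps)
  have "(1 - a) / (1 - x) * (1 - x) + a / x * x = 1" "(1 - b) / (1 - y) * (1 - y) + b / y * y = 1"
    using assms by simp_all
  moreover have "a / x - (1 - a) / (1 - x) = (a - x) / (x * (1 - x))"
    "b / y - (1 - b) / (1 - y) = (b - y) / (y * (1 - y))"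
    using assms by (simp_all add: field_simps)
  ultimately show ?thesis
    unfolding bilinear by simp
qed

section \<open>The two-feature Bernoulli mixture\<close>

lemma binary_points_2:
  "(binary_points :: (real^2) set) = {vector [0, 0], vector [0, 1], vector [1, 0], vector [1, 1]}"
proof (intro set_eqI iffI)
  fix x :: "real^2"
  assume "x \<in> binary_points"
  then have "(x$1 = 0 \<or> x$1 = 1) \<and> (x$2 = 0 \<or> x$2 = 1)"
    unfolding binary_points_def by auto
  moreover have "x = vector [x$1, x$2]"
    by (simp add: vec_eq_iff forall_2)
  ultimately show "x \<in> {vector [0, 0], vector [0, 1], vector [1, 0], vector [1, 1]}"
    by auto
qed (auto simp: binary_points_def forall_2)

lemma sum_binary_points_2:
  "(\<Sum>x\<in>(binary_points :: (real^2) set). f x)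
    = f (vector [0, 0]) + f (vector [0, 1]) + f (vector [1, 0]) + f (vector [1, 1])"
proof -
  have "distinct [vector [0, 0], vector [0, 1], vector [1, 0], vector [1, 1] :: real^2]"
    by (simp add: vec_eq_iff forall_2)
  then show ?thesis
    unfolding binary_points_2 by (simp add: add.assoc)
qed

lemma bern_2:
  "bern (mu :: real^2) x = (if x$1 = 1 then mu$1 else 1 - mu$1) * (if x$2 = 1 then mu$2 else 1 - mu$2)"
  unfolding bern_def UNIV_2 by simp

lemma mem_box_01_2: "(mu :: real^2) \<in> box 0 1 \<longleftrightarrow> 0 < mu$1 \<and> mu$1 < 1 \<and> 0 < mu$2 \<and> mu$2 < 1"
  by (auto simp: mem_box_cart forall_2)

locale two_feature_mixture =
  fixes p1 :: real and m1 m2 :: "real^2"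
  assumes weight: "0 < p1" "p1 < 1"
    and means: "\<forall>i. 0 \<le> m1$i \<and> m1$i \<le> 1" "\<forall>i. 0 \<le> m2$i \<and> m2$i \<le> 1"
    and covariance_nonzero: "sigma12 p1 m1 m2 \<noteq> 0"
    and mean_interior: "\<forall>i. 0 < xbar p1 m1 m2 $ i \<and> xbar p1 m1 m2 $ i < 1"
begin

abbreviation "x1 \<equiv> xbar p1 m1 m2 $ 1"
abbreviation "x2 \<equiv> xbar p1 m1 m2 $ 2"
abbreviation "\<sigma> \<equiv> sigma12 p1 m1 m2"
abbreviation "F \<equiv> em_mu1 p1 m1 m2"

definition cell :: "real \<Rightarrow> real \<Rightarrow> real" where
  "cell a b = pstar p1 m1 m2 (vector [a, b])"

lemma cell_values:
  "cell 0 0 = p1 * (1 - m1$1) * (1 - m1$2) + (1 - p1) * (1 - m2$1) * (1 - m2$2)"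
  "cell 0 1 = p1 * (1 - m1$1) * m1$2 + (1 - p1) * (1 - m2$1) * m2$2"
  "cell 1 0 = p1 * m1$1 * (1 - m1$2) + (1 - p1) * m2$1 * (1 - m2$2)"
  "cell 1 1 = p1 * m1$1 * m1$2 + (1 - p1) * m2$1 * m2$2"
  unfolding cell_def pstar_def bern_2 by simp_all

lemma cells_nonneg: "0 \<le> cell 0 0" "0 \<le> cell 0 1" "0 \<le> cell 1 0" "0 \<le> cell 1 1"
  unfolding cell_values using weight means by (auto intro!: add_nonneg_nonneg mult_nonneg_nonneg)

lemma cells_total: "cell 0 0 + cell 0 1 + cell 1 0 + cell 1 1 = 1"
  unfolding cell_values by (simp add: algebra_simps)

lemma xbar_cells: "x1 = cell 1 0 + cell 1 1" "x2 = cell 0 1 + cell 1 1"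
  unfolding xbar_def sum_binary_points_2 cell_def by simp_all

lemma xbar_bounds: "0 < x1" "x1 < 1" "0 < x2" "x2 < 1"
  using mean_interior by auto

lemma sigma_cells: "\<sigma> = cell 1 1 - x1 * x2"
  unfolding sigma12_def Estar_def sum_binary_points_2 xbar_cells cell_def[symmetric] by simp

lemma cells_by_marginals:
  "cell 0 0 = (1 - x1) * (1 - x2) + \<sigma>" "cell 0 1 = (1 - x1) * x2 - \<sigma>"
  "cell 1 0 = x1 * (1 - x2) - \<sigma>" "cell 1 1 = x1 * x2 + \<sigma>"
  using sigma_cells xbar_cells cells_total by (simp_all add: algebra_simps)

lemma sigma_cross_product: "\<sigma> = cell 1 1 * cell 0 0 - cell 1 0 * cell 0 1"
  unfolding cells_by_marginals by (simp add: algebra_simps)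

lemma sigma_component_means: "\<sigma> = p1 * (1 - p1) * (m1$1 - m2$1) * (m1$2 - m2$2)"
  unfolding sigma_cells xbar_cells cell_values by (simp add: algebra_simps)

lemma Z1_cells:
  "Z1 p1 m1 m2 mu
    = cell 0 0 * ((1 - mu$1) / (1 - x1)) * ((1 - mu$2) / (1 - x2))
    + cell 0 1 * ((1 - mu$1) / (1 - x1)) * (mu$2 / x2)
    + cell 1 0 * (mu$1 / x1) * ((1 - mu$2) / (1 - x2)) + cell 1 1 * (mu$1 / x1) * (mu$2 / x2)"
  unfolding Z1_def sum_binary_points_2 qtil1_def bern_2 cell_def[symmetric] using xbar_bounds by simp

lemma Z1_formula: "Z1 p1 m1 m2 mu = 1 + \<sigma> * (mu$1 - x1) * (mu$2 - x2) / (x1 * (1 - x1) * x2 * (1 - x2))"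
  unfolding Z1_cells cells_by_marginals using xbar_bounds by (intro reweighted_table_total) simp_all

lemma em_mu1_components:
  "F mu $ 1 = (cell 1 0 * (mu$1 / x1) * ((1 - mu$2) / (1 - x2)) + cell 1 1 * (mu$1 / x1) * (mu$2 / x2))
      / Z1 p1 m1 m2 mu"
  "F mu $ 2 = (cell 0 1 * ((1 - mu$1) / (1 - x1)) * (mu$2 / x2) + cell 1 1 * (mu$1 / x1) * (mu$2 / x2))
      / Z1 p1 m1 m2 mu"
  unfolding em_mu1_def Z1_def[symmetric] sum_binary_points_2 qtil1_def bern_2 cell_def[symmetric]
  using xbar_bounds by (simp_all add: divide_inverse)

lemma Z1_split:
  fixes mu :: "real^2"
  defines "r0 \<equiv> (1 - mu$1) / (1 - x1)" and "r1 \<equiv> mu$1 / x1"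
    and "s0 \<equiv> (1 - mu$2) / (1 - x2)" and "s1 \<equiv> mu$2 / x2"
  shows "Z1 p1 m1 m2 mu = r0 * (cell 0 0 * s0 + cell 0 1 * s1) + r1 * (cell 1 0 * s0 + cell 1 1 * s1)"
    "Z1 p1 m1 m2 mu = s0 * (cell 0 0 * r0 + cell 1 0 * r1) + s1 * (cell 0 1 * r0 + cell 1 1 * r1)"
  unfolding Z1_cells r0_def[symmetric] r1_def[symmetric] s0_def[symmetric] s1_def[symmetric]
  by (simp_all add: algebra_simps)

lemma em_mu1_split:
  fixes mu :: "real^2"
  defines "r0 \<equiv> (1 - mu$1) / (1 - x1)" and "r1 \<equiv> mu$1 / x1"
    and "s0 \<equiv> (1 - mu$2) / (1 - x2)" and "s1 \<equiv> mu$2 / x2"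
  shows "F mu $ 1 = r1 * (cell 1 0 * s0 + cell 1 1 * s1) / Z1 p1 m1 m2 mu"
    "F mu $ 2 = s1 * (cell 0 1 * r0 + cell 1 1 * r1) / Z1 p1 m1 m2 mu"
  unfolding em_mu1_components r0_def[symmetric] r1_def[symmetric] s0_def[symmetric] s1_def[symmetric]
  by (simp_all add: algebra_simps)

lemma cell_margins_pos:
  "0 < cell 0 0 + cell 0 1" "0 < cell 1 0 + cell 1 1" "0 < cell 0 0 + cell 1 0" "0 < cell 0 1 + cell 1 1"
  using xbar_cells xbar_bounds cells_total by linarith+

lemma reweighted_rows_pos:
  fixes mu :: "real^2"
  assumes "mu \<in> box 0 1"
  shows "0 < (1 - mu$1) / (1 - x1) * (cell 0 0 * ((1 - mu$2) / (1 - x2)) + cell 0 1 * (mu$2 / x2))"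
    "0 < mu$1 / x1 * (cell 1 0 * ((1 - mu$2) / (1 - x2)) + cell 1 1 * (mu$2 / x2))"
    "0 < (1 - mu$2) / (1 - x2) * (cell 0 0 * ((1 - mu$1) / (1 - x1)) + cell 1 0 * (mu$1 / x1))"
    "0 < mu$2 / x2 * (cell 0 1 * ((1 - mu$1) / (1 - x1)) + cell 1 1 * (mu$1 / x1))"
  using assms xbar_bounds cells_nonneg cell_margins_pos unfolding mem_box_01_2
  by (intro mult_pos_pos nonneg_weights_pos divide_pos_pos; simp)+

lemma Z1_pos:
  assumes "mu \<in> box 0 1"
  shows "0 < Z1 p1 m1 m2 mu"
  unfolding Z1_split(1) using reweighted_rows_pos(1,2)[OF assms] by (rule add_pos_pos)

lemma em_mu1_box:
  assumes "mu \<in> box 0 1"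
  shows "F mu \<in> box 0 1"
proof -
  have fraction: "0 < N1 / (N0 + N1) \<and> N1 / (N0 + N1) < 1" if "0 < N0" "0 < N1" for N0 N1 :: real
    using that by simp
  have "0 < F mu $ 1 \<and> F mu $ 1 < 1"
    unfolding em_mu1_split(1) Z1_split(1) by (rule fraction[OF reweighted_rows_pos(1,2)[OF assms]])
  moreover have "0 < F mu $ 2 \<and> F mu $ 2 < 1"
    unfolding em_mu1_split(2) Z1_split(2) by (rule fraction[OF reweighted_rows_pos(3,4)[OF assms]])
  ultimately show ?thesis
    unfolding mem_box_01_2 by simp
qed

lemma odds_ratio_em_mu1:
  assumes "mu \<in> box 0 1"
  shows "odds_ratio x1 (F mu $ 1)
      = odds_ratio x1 (mu$1) * moebius_gain (cell 0 0) (cell 0 1) (cell 1 0) (cell 1 1) (odds_ratio x2 (mu$2))"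
    "odds_ratio x2 (F mu $ 2)
      = odds_ratio x2 (mu$2) * moebius_gain (cell 0 0) (cell 1 0) (cell 0 1) (cell 1 1) (odds_ratio x1 (mu$1))"
proof -
  have ratio: "(u / x) / ((1 - u) / (1 - x)) = odds_ratio x u" for x u :: real
    unfolding odds_ratio_def by (simp add: field_simps)
  have "odds_ratio x1 (F mu $ 1)
      = odds_ratio x1 (mu$1) * moebius_gain (cell 0 0) (cell 0 1) (cell 1 0) (cell 1 1)
          ((mu$2 / x2) / ((1 - mu$2) / (1 - x2)))"
    unfolding em_mu1_split(1) Z1_split(1) using assms cells_nonneg xbar_cells cells_total xbar_bounds
    by (intro odds_ratio_em_update) (auto simp: mem_box_01_2)
  then show "odds_ratio x1 (F mu $ 1)
      = odds_ratio x1 (mu$1) * moebius_gain (cell 0 0) (cell 0 1) (cell 1 0) (cell 1 1) (odds_ratio x2 (mu$2))"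
    unfolding ratio .
  have "odds_ratio x2 (F mu $ 2)
      = odds_ratio x2 (mu$2) * moebius_gain (cell 0 0) (cell 1 0) (cell 0 1) (cell 1 1)
          ((mu$1 / x1) / ((1 - mu$1) / (1 - x1)))"
    unfolding em_mu1_split(2) Z1_split(2) using assms cells_nonneg xbar_cells cells_total xbar_bounds
    by (intro odds_ratio_em_update) (auto simp: mem_box_01_2)
  then show "odds_ratio x2 (F mu $ 2)
      = odds_ratio x2 (mu$2) * moebius_gain (cell 0 0) (cell 1 0) (cell 0 1) (cell 1 1) (odds_ratio x1 (mu$1))"
    unfolding ratio .
qed

text \<open>Reversing the second feature when sigma_12 < 0 makes the cell table concordant, so that both
  gains pull towards one.\<close>

definition flip :: "real \<Rightarrow> real" where
  "flip y = (if 0 < \<sigma> then y else 1 - y)"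

definition table :: "real \<Rightarrow> real \<Rightarrow> real" where
  "table a b = cell a (flip b)"

definition odds1 :: "real^2 \<Rightarrow> real" where
  "odds1 mu = odds_ratio x1 (mu$1)"

definition odds2 :: "real^2 \<Rightarrow> real" where
  "odds2 mu = odds_ratio (flip x2) (flip (mu$2))"

definition dev1 :: "real^2 \<Rightarrow> real" where
  "dev1 mu = mu$1 - x1"

definition dev2 :: "real^2 \<Rightarrow> real" where
  "dev2 mu = flip (mu$2) - flip x2"

abbreviation "gain1 \<equiv> moebius_gain (table 0 0) (table 0 1) (table 1 0) (table 1 1)"
abbreviation "gain2 \<equiv> moebius_gain (table 0 0) (table 1 0) (table 0 1) (table 1 1)"

lemma flip_bounds: "0 < y \<Longrightarrow> y < 1 \<Longrightarrow> 0 < flip y \<and> flip y < 1"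
  unfolding flip_def by simp

lemma dev2_eq: "dev2 mu = sgn \<sigma> * (mu$2 - x2)"
  unfolding dev2_def flip_def using covariance_nonzero by (auto simp: sgn_if)

lemma table_concordant: "concordant_table (table 0 0) (table 0 1) (table 1 0) (table 1 1)"
proof (cases "0 < \<sigma>")
  case True
  then show ?thesis
    unfolding concordant_table_def table_def flip_def using cells_nonneg sigma_cross_product by simp
next
  case False
  then have "\<sigma> < 0" using covariance_nonzero by simp
  then show ?thesis
    unfolding concordant_table_def table_def flip_def using cells_nonneg sigma_cross_product
    by (simp add: mult.commute)
qed

lemma odds_gains_exist: "\<exists>k1 k2. odds_gain gain1 k1 \<and> odds_gain gain2 k2"
  using concordant_table.gain_is_odds_gain[OF table_concordant]
    concordant_table.gain_is_odds_gain[OF concordant_table_transpose[OF table_concordant]] by blast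

lemma odds1_em_mu1:
  assumes "mu \<in> box 0 1"
  shows "odds1 (F mu) = odds1 mu * gain1 (odds2 mu)"
proof (cases "0 < \<sigma>")
  case True
  then show ?thesis
    unfolding odds1_def odds2_def table_def flip_def using odds_ratio_em_mu1(1)[OF assms] by simp
next
  case False
  then have flip: "flip y = 1 - y" for y
    unfolding flip_def by simp
  have "0 < odds_ratio x2 (mu$2)"
    using assms xbar_bounds by (simp add: mem_box_01_2 odds_ratio_pos)
  have "gain1 (odds2 mu) = moebius_gain (cell 0 1) (cell 0 0) (cell 1 1) (cell 1 0) (1 / odds_ratio x2 (mu$2))"
    unfolding odds2_def table_def flip odds_ratio_complement by simp
  also have "\<dots> = moebius_gain (cell 0 0) (cell 0 1) (cell 1 0) (cell 1 1) (odds_ratio x2 (mu$2))"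
    by (rule moebius_gain_inverse_arg[OF \<open>0 < odds_ratio x2 (mu$2)\<close>, symmetric])
  finally show ?thesis
    using odds_ratio_em_mu1(1)[OF assms] unfolding odds1_def by simp
qed

lemma odds2_em_mu1:
  assumes "mu \<in> box 0 1"
  shows "odds2 (F mu) = odds2 mu * gain2 (odds1 mu)"
proof (cases "0 < \<sigma>")
  case True
  then show ?thesis
    unfolding odds1_def odds2_def table_def flip_def using odds_ratio_em_mu1(2)[OF assms] by simp
next
  case False
  then have flip: "flip y = 1 - y" for y
    unfolding flip_def by simp
  have "gain2 (odds1 mu) = 1 / moebius_gain (cell 0 0) (cell 1 0) (cell 0 1) (cell 1 1) (odds1 mu)"
    unfolding table_def flip by (simp add: moebius_gain_reciprocal)
  then show ?thesis
    using odds_ratio_em_mu1(2)[OF assms] unfolding odds1_def odds2_def flip odds_ratio_complement by simp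
qed

lemma em_mu1_iterate_box: "mu \<in> box 0 1 \<Longrightarrow> (F ^^ t) mu \<in> box 0 1"
  by (induction t) (simp_all add: em_mu1_box)

lemma odds_coupled_orbit:
  assumes "mu \<in> box 0 1"
  shows "coupled_orbit gain1 gain2 (\<lambda>t. odds1 ((F ^^ t) mu)) (\<lambda>t. odds2 ((F ^^ t) mu))"
  unfolding coupled_orbit_def
  using odds1_em_mu1[OF em_mu1_iterate_box[OF assms]] odds2_em_mu1[OF em_mu1_iterate_box[OF assms]] by simp

lemma flipped_coordinates_bounds:
  fixes mu :: "real^2"
  assumes "mu \<in> box 0 1"
  shows "0 < flip x2" "flip x2 < 1" "0 < flip (mu$2)" "flip (mu$2) < 1"
  using flip_bounds[of x2] flip_bounds[of "mu$2"] xbar_bounds assms by (simp_all add: mem_box_01_2)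

lemma odds_pos: "mu \<in> box 0 1 \<Longrightarrow> 0 < odds1 mu \<and> 0 < odds2 mu"
  unfolding odds1_def odds2_def using xbar_bounds flipped_coordinates_bounds[of mu]
  by (simp add: odds_ratio_pos mem_box_01_2)

lemma odds_le_iff:
  assumes "mu \<in> box 0 1" "mu' \<in> box 0 1"
  shows "odds1 mu \<le> odds1 mu' \<longleftrightarrow> dev1 mu \<le> dev1 mu'" "odds2 mu \<le> odds2 mu' \<longleftrightarrow> dev2 mu \<le> dev2 mu'"
  unfolding odds1_def odds2_def dev1_def dev2_def
  using assms xbar_bounds flipped_coordinates_bounds[OF assms(1)] flipped_coordinates_bounds[OF assms(2)]
  by (simp_all add: odds_ratio_le_iff mem_box_01_2)

lemma odds_one_iff:
  assumes "mu \<in> box 0 1"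
  shows "1 < odds1 mu \<longleftrightarrow> 0 < dev1 mu" "odds1 mu < 1 \<longleftrightarrow> dev1 mu < 0"
    "1 < odds2 mu \<longleftrightarrow> 0 < dev2 mu" "odds2 mu < 1 \<longleftrightarrow> dev2 mu < 0"
  unfolding odds1_def odds2_def dev1_def dev2_def
  using assms xbar_bounds flipped_coordinates_bounds[OF assms]
  by (simp_all add: odds_ratio_gt_one_iff odds_ratio_lt_one_iff mem_box_01_2)

lemma Z1_dev: "Z1 p1 m1 m2 mu = 1 + \<bar>\<sigma>\<bar> * (dev1 mu * dev2 mu) / (x1 * (1 - x1) * x2 * (1 - x2))"
proof -
  have "\<sigma> * (mu$1 - x1) * (mu$2 - x2) = \<bar>\<sigma>\<bar> * (dev1 mu * dev2 mu)"
    unfolding dev1_def dev2_eq by (simp add: abs_sgn ac_simps)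
  then show ?thesis unfolding Z1_formula by simp
qed

lemma lam_in_pos_regions:
  assumes "0 < dev1 mu * dev2 mu"
  shows "lam p1 m1 m2 mu \<in> pos_regions"
proof -
  have lam: "lam p1 m1 m2 mu $ i
      = (m1$i - m2$i) * (mu$i - xbar p1 m1 m2 $ i) / (xbar p1 m1 m2 $ i * (1 - xbar p1 m1 m2 $ i))" for i
  proof -
    have halves: "2 / S * (d / 2) * e = d * e / S" for S d e :: real
      by (cases "S = 0") (simp_all add: field_simps)
    show ?thesis unfolding lam_def by (simp only: vec_lambda_beta halves)
  qed
  have "lam p1 m1 m2 mu $ 1 * lam p1 m1 m2 mu $ 2
      = ((m1$1 - m2$1) * (m1$2 - m2$2)) * ((mu$1 - x1) * (mu$2 - x2)) / ((x1 * (1 - x1)) * (x2 * (1 - x2)))"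
    unfolding lam by simp
  also have "(m1$1 - m2$1) * (m1$2 - m2$2) = \<sigma> / (p1 * (1 - p1))"
    unfolding sigma_component_means using weight by simp
  also have "\<sigma> / (p1 * (1 - p1)) * ((mu$1 - x1) * (mu$2 - x2))
      = \<bar>\<sigma>\<bar> * (dev1 mu * dev2 mu) / (p1 * (1 - p1))"
    unfolding dev1_def dev2_eq by (simp add: abs_sgn ac_simps)
  finally have "0 < lam p1 m1 m2 mu $ 1 * lam p1 m1 m2 mu $ 2"
    using assms covariance_nonzero weight xbar_bounds by simp
  then show ?thesis
    unfolding pos_regions_def by (auto simp: zero_less_mult_iff forall_2)
qed

lemma escaping_dev_product_mono:
  assumes mu: "mu \<in> box 0 1" and escaped: "0 < (odds1 mu - 1) * (odds2 mu - 1)"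
  shows "0 < dev1 mu * dev2 mu \<and> dev1 mu * dev2 mu \<le> dev1 ((F ^^ t) mu) * dev2 ((F ^^ t) mu)"
proof -
  obtain k1 k2 where G: "odds_gain gain1 k1" "odds_gain gain2 k2"
    using odds_gains_exist by blast
  let ?mu = "(F ^^ t) mu"
  note orbit = odds_coupled_orbit[OF mu]
  note le_iff = odds_le_iff[OF mu em_mu1_iterate_box[OF mu]] odds_le_iff[OF em_mu1_iterate_box[OF mu] mu]
  have "(1 < odds1 mu \<and> 1 < odds2 mu) \<or> (odds1 mu < 1 \<and> odds2 mu < 1)"
    using escaped by (auto simp: zero_less_mult_iff)
  then show ?thesis
  proof
    assume above: "1 < odds1 mu \<and> 1 < odds2 mu"
    then have "odds1 mu \<le> odds1 ?mu" "odds2 mu \<le> odds2 ?mu"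
      using escaping_orbit_above[OF G orbit, of t] by simp_all
    moreover have "0 < dev1 mu" "0 < dev2 mu"
      using above odds_one_iff[OF mu] by simp_all
    ultimately show ?thesis
      using le_iff by (simp add: mult_mono)
  next
    assume below: "odds1 mu < 1 \<and> odds2 mu < 1"
    then have "odds1 ?mu \<le> odds1 mu" "odds2 ?mu \<le> odds2 mu"
      using escaping_orbit_below[OF G orbit, of t] odds_pos[OF mu] by simp_all
    moreover have "dev1 mu < 0" "dev2 mu < 0"
      using below odds_one_iff[OF mu] by simp_all
    ultimately have "(- dev1 mu) * (- dev2 mu) \<le> (- dev1 ?mu) * (- dev2 ?mu)"
      using le_iff by (intro mult_mono) simp_all
    then show ?thesis
      using \<open>dev1 mu < 0\<close> \<open>dev2 mu < 0\<close> by (simp add: mult_neg_neg)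
  qed
qed

lemma escaping_orbit_converges:
  assumes mu0: "mu0 \<in> box 0 1"
    and escapes: "\<not> avoids_escape_quadrants (\<lambda>t. odds1 ((F ^^ t) mu0)) (\<lambda>t. odds2 ((F ^^ t) mu0))"
  shows "(\<exists>C r. 0 < r \<and> r < 1 \<and> (\<forall>t. infdist (lam p1 m1 m2 ((F ^^ t) mu0)) pos_regions \<le> C * r ^ t))
    \<and> filterlim (\<lambda>t. \<Prod>s<t. Z1 p1 m1 m2 ((F ^^ s) mu0)) at_top sequentially"
proof
  obtain T where T: "0 < (odds1 ((F ^^ T) mu0) - 1) * (odds2 ((F ^^ T) mu0) - 1)"
    using escapes unfolding avoids_escape_quadrants_def by (auto simp: not_le)
  define d where "d = dev1 ((F ^^ T) mu0) * dev2 ((F ^^ T) mu0)"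
  have dev_ge: "0 < d \<and> d \<le> dev1 ((F ^^ t) mu0) * dev2 ((F ^^ t) mu0)" if "T \<le> t" for t
  proof -
    have "(F ^^ (t - T)) ((F ^^ T) mu0) = (F ^^ (t - T + T)) mu0"
      by (simp add: funpow_add)
    then have "(F ^^ (t - T)) ((F ^^ T) mu0) = (F ^^ t) mu0"
      using that by simp
    then show ?thesis
      using escaping_dev_product_mono[OF em_mu1_iterate_box[OF mu0] T, of "t - T"] unfolding d_def by simp
  qed
  have "infdist (lam p1 m1 m2 ((F ^^ t) mu0)) pos_regions = 0" if "T \<le> t" for t
    using lam_in_pos_regions dev_ge[OF that] by simp
  then show "\<exists>C r. 0 < r \<and> r < 1 \<and> (\<forall>t. infdist (lam p1 m1 m2 ((F ^^ t) mu0)) pos_regions \<le> C * r ^ t)"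
    by (intro linear_rate_if_eventually_zero[of _ T]) (simp_all add: infdist_nonneg)
  let ?S = "x1 * (1 - x1) * x2 * (1 - x2)"
  show "filterlim (\<lambda>t. \<Prod>s<t. Z1 p1 m1 m2 ((F ^^ s) mu0)) at_top sequentially"
  proof (rule prod_tendsto_at_top_if_eventually_ge)
    show "0 < Z1 p1 m1 m2 ((F ^^ s) mu0)" for s
      by (rule Z1_pos[OF em_mu1_iterate_box[OF mu0]])
    show "1 < 1 + \<bar>\<sigma>\<bar> * d / ?S"
      using dev_ge[of T] covariance_nonzero xbar_bounds by simp
    show "1 + \<bar>\<sigma>\<bar> * d / ?S \<le> Z1 p1 m1 m2 ((F ^^ s) mu0)" if "T \<le> s" for s
    proof -
      have "\<bar>\<sigma>\<bar> * d \<le> \<bar>\<sigma>\<bar> * (dev1 ((F ^^ s) mu0) * dev2 ((F ^^ s) mu0))"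
        using dev_ge[OF that] by (simp add: mult_left_mono)
      then show ?thesis
        unfolding Z1_dev using xbar_bounds by (simp add: divide_right_mono)
    qed
  qed
qed

definition trapped :: "(real^2) set" where
  "trapped = {mu \<in> box 0 1. avoids_escape_quadrants (\<lambda>t. odds1 ((F ^^ t) mu)) (\<lambda>t. odds2 ((F ^^ t) mu))}"

lemma trapped_comparable_eq:
  assumes "mu \<in> trapped" "mu' \<in> trapped" "dev1 mu \<le> dev1 mu'" "dev2 mu \<le> dev2 mu'"
  shows "mu = mu'"
proof -
  obtain k1 k2 where G: "odds_gain gain1 k1" "odds_gain gain2 k2"
    using odds_gains_exist by blast
  have box: "mu \<in> box 0 1" "mu' \<in> box 0 1"
    using assms unfolding trapped_def by auto
  have "odds1 ((F ^^ 0) mu) = odds1 ((F ^^ 0) mu') \<and> odds2 ((F ^^ 0) mu) = odds2 ((F ^^ 0) mu')"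
  proof (rule avoiding_orbits_incomparable[OF G odds_coupled_orbit[OF box(1)] odds_coupled_orbit[OF box(2)]])
    show "avoids_escape_quadrants (\<lambda>t. odds1 ((F ^^ t) mu)) (\<lambda>t. odds2 ((F ^^ t) mu))"
      "avoids_escape_quadrants (\<lambda>t. odds1 ((F ^^ t) mu')) (\<lambda>t. odds2 ((F ^^ t) mu'))"
      using assms(1,2) unfolding trapped_def by auto
    show "0 < odds1 ((F ^^ 0) mu)" "0 < odds2 ((F ^^ 0) mu)"
      using odds_pos[OF box(1)] by simp_all
    show "odds1 ((F ^^ 0) mu) \<le> odds1 ((F ^^ 0) mu')" "odds2 ((F ^^ 0) mu) \<le> odds2 ((F ^^ 0) mu')"
      using assms(3,4) odds_le_iff[OF box] by simp_all
  qed
  then have "dev1 mu' \<le> dev1 mu" "dev2 mu' \<le> dev2 mu"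
    using odds_le_iff[OF box(2,1)] by simp_all
  with assms(3,4) have "dev1 mu = dev1 mu'" "dev2 mu = dev2 mu'"
    by simp_all
  then have "mu$1 = mu'$1" "mu$2 = mu'$2"
    unfolding dev1_def dev2_eq using covariance_nonzero by (simp_all add: sgn_if split: if_splits)
  then show ?thesis
    by (simp add: vec_eq_iff forall_2)
qed

lemma trapped_discordant:
  assumes "mu \<in> trapped" "mu' \<in> trapped" "mu \<noteq> mu'"
  shows "sgn \<sigma> * (mu$1 - mu'$1) * (mu$2 - mu'$2) < 0"
proof (rule ccontr)
  assume "\<not> ?thesis"
  then have "0 \<le> (dev1 mu' - dev1 mu) * (dev2 mu' - dev2 mu)"
    unfolding dev1_def dev2_eq by (simp add: algebra_simps not_less)
  then have "(dev1 mu \<le> dev1 mu' \<and> dev2 mu \<le> dev2 mu') \<or> (dev1 mu' \<le> dev1 mu \<and> dev2 mu' \<le> dev2 mu)"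
    by (auto simp: zero_le_mult_iff)
  then show False
    using trapped_comparable_eq[OF assms(1,2)] trapped_comparable_eq[OF assms(2,1)] assms(3) by auto
qed

lemma negligible_trapped: "negligible trapped"
  by (rule negligible_discordant_set[of "sgn \<sigma>"]) (simp_all add: abs_sgn_eq covariance_nonzero trapped_discordant)

end

theorem mainTheorem8:
  fixes p1 :: real and m1 m2 :: "real^2"
  assumes "0 < p1" "p1 < 1"
    and "\<forall>i. 0 \<le> m1$i \<and> m1$i \<le> 1"
    and "\<forall>i. 0 \<le> m2$i \<and> m2$i \<le> 1"
    and "sigma12 p1 m1 m2 \<noteq> 0"
    and "\<forall>i. 0 < (xbar p1 m1 m2)$i \<and> (xbar p1 m1 m2)$i < 1"
  shows "AE mu0 in uniform_measure lborel {mu::real^2. \<forall>i. 0 \<le> mu$i \<and> mu$i \<le> 1}.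
           (\<exists>C r. 0 < r \<and> r < 1 \<and>
              (\<forall>t. infdist (lam p1 m1 m2 ((em_mu1 p1 m1 m2 ^^ t) mu0)) pos_regions \<le> C * r ^ t))
         \<and> filterlim (\<lambda>t. \<Prod>s<t. Z1 p1 m1 m2 ((em_mu1 p1 m1 m2 ^^ s) mu0)) at_top sequentially"
    (is "AE mu0 in uniform_measure lborel ?cube. ?escapes mu0")
proof -
  interpret two_feature_mixture p1 m1 m2
    using assms by unfold_locales
  have cube: "?cube = cbox 0 1"
    by (auto simp: mem_box_cart)
  have "{mu \<in> space lebesgue. \<not> (mu \<in> ?cube \<longrightarrow> ?escapes mu)} \<subseteq> (cbox 0 1 - box 0 1) \<union> trapped"
    using escaping_orbit_converges unfolding cube trapped_def by blast
  moreover have "(cbox 0 1 - box 0 1) \<union> trapped \<in> null_sets lebesgue"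
    using negligible_frontier_interval negligible_trapped negligible_Un negligible_iff_null_sets by blast
  ultimately have "AE mu in lebesgue. mu \<in> ?cube \<longrightarrow> ?escapes mu"
    by (intro AE_I')
  then show ?thesis
    unfolding cube by (intro AE_uniform_measureI) (simp_all add: AE_completion_iff)
qed

end
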